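(* Let $u,v$ be uniform twins, or opposite twins, of an oriented graph $G^\sigma$. Then $sr(G^\sigma)=sr(G^\sigma-u)=sr(G^\sigma-v)$.
   Context: An oriented graph $G^\sigma$ is a simple graph $G$ together with an orientation of each edge. Its skew-adjacency matrix $S(G^\sigma)=(s_{ij})$ has $s_{ij}=1$ if there is an arc from $v_i$ to $v_j$, $s_{ij}=-1$ if there is an arc from $v_j$ to $v_i$, and $0$ otherwise; the skew-rank $sr(G^\sigma)$ is the rank of $S(G^\sigma)$. $G^\sigma-u$ is obtained by deleting $u$ and its incident edges. For a common neighbor $w$ of two nonadjacent vertices $u,v$: the edges among $u,v,w$ have uniform orientations if the arcs go from both $u$ and $v$ to $w$, or from $w$ to both $u$ and $v$; they have opposite orientations if one arc goes from $u$ (resp. $v$) to $w$ and the other from $w$ to $v$ (resp. $u$). Two nonadjacent vertices $u,v$ are uniform (resp. opposite) twins if $N(u)=N(v)$ and for every common neighbor $w$ the edges among $u,v,w$ have uniform (resp. opposite) orientations. *)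

theory Defs
  imports "Jordan_Normal_Form.DL_Rank"
begin

definition oriented_graph :: "'a set \<Rightarrow> ('a \<Rightarrow> 'a \<Rightarrow> bool) \<Rightarrow> bool" where
  "oriented_graph V A \<longleftrightarrow> finite V \<and>
     (\<forall>x y. A x y \<longrightarrow> x \<in> V \<and> y \<in> V \<and> x \<noteq> y \<and> \<not> A y x)"

definition adjacent :: "('a \<Rightarrow> 'a \<Rightarrow> bool) \<Rightarrow> 'a \<Rightarrow> 'a \<Rightarrow> bool" where
  "adjacent A x y \<longleftrightarrow> A x y \<or> A y x"

definition nbhd :: "'a set \<Rightarrow> ('a \<Rightarrow> 'a \<Rightarrow> bool) \<Rightarrow> 'a \<Rightarrow> 'a set" where
  "nbhd V A x = {w \<in> V. adjacent A x w}"

definition skew_entry :: "('a \<Rightarrow> 'a \<Rightarrow> bool) \<Rightarrow> 'a \<Rightarrow> 'a \<Rightarrow> real" where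
  "skew_entry A x y = (if A x y then 1 else if A y x then -1 else 0)"

definition skew_matrix :: "'a::linorder set \<Rightarrow> ('a \<Rightarrow> 'a \<Rightarrow> bool) \<Rightarrow> real mat" where
  "skew_matrix V A = (let vs = sorted_list_of_set V in
     mat (card V) (card V) (\<lambda>(i, j). skew_entry A (vs ! i) (vs ! j)))"

definition skew_rank :: "'a::linorder set \<Rightarrow> ('a \<Rightarrow> 'a \<Rightarrow> bool) \<Rightarrow> nat" where
  "skew_rank V A = vec_space.rank (card V) (skew_matrix V A)"

definition del_vertex_arcs :: "('a \<Rightarrow> 'a \<Rightarrow> bool) \<Rightarrow> 'a \<Rightarrow> 'a \<Rightarrow> 'a \<Rightarrow> bool" where
  "del_vertex_arcs A u = (\<lambda>x y. A x y \<and> x \<noteq> u \<and> y \<noteq> u)"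

definition uniform_twins :: "'a set \<Rightarrow> ('a \<Rightarrow> 'a \<Rightarrow> bool) \<Rightarrow> 'a \<Rightarrow> 'a \<Rightarrow> bool" where
  "uniform_twins V A u v \<longleftrightarrow> u \<in> V \<and> v \<in> V \<and> u \<noteq> v \<and> \<not> adjacent A u v \<and>
     nbhd V A u = nbhd V A v \<and>
     (\<forall>w \<in> nbhd V A u. (A u w \<and> A v w) \<or> (A w u \<and> A w v))"

definition opposite_twins :: "'a set \<Rightarrow> ('a \<Rightarrow> 'a \<Rightarrow> bool) \<Rightarrow> 'a \<Rightarrow> 'a \<Rightarrow> bool" where
  "opposite_twins V A u v \<longleftrightarrow> u \<in> V \<and> v \<in> V \<and> u \<noteq> v \<and> \<not> adjacent A u v \<and>
     nbhd V A u = nbhd V A v \<and>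
     (\<forall>w \<in> nbhd V A u. (A u w \<and> A w v) \<or> (A v w \<and> A w u))"

end

theory Submission
  imports Defs "Jordan_Normal_Form.Matrix_Kernel"
begin

text \<open>If u and v are uniform (resp. opposite) twins, then for every vertex w the skew entries
  satisfy s(w,u) = c s(w,v) and s(u,w) = c s(v,w) with c = 1 (resp. c = -1): row and column u of
  the skew-adjacency matrix are c times row and column v. Deleting the redundant row u does not
  change the kernel, hence not the rank; afterwards column u is c times column v, so deleting it
  does not change the column space. What remains is the skew-adjacency matrix of G - u. The
  situation is symmetric in u and v.\<close>

lemma mult_mat_vec_index_sum:
  fixes A :: "'a::comm_semiring_0 mat"
  assumes "A \<in> carrier_mat n k" "x \<in> carrier_vec k" "i < n"
  shows "(A *\<^sub>v x) $ i = (\<Sum>l<k. A $$ (i, l) * x $ l)"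
  using assms unfolding mult_mat_vec_def scalar_prod_def
  by (auto simp: atLeast0LessThan intro!: sum.cong)

lemma (in vec_space) lincomb_col_image:
  assumes A: "A \<in> carrier_mat n k" and J: "J \<subseteq> {..<k}" and inj: "inj_on (col A) J"
  shows "lincomb a (col A ` J) = A *\<^sub>v vec k (\<lambda>l. if l \<in> J then a (col A l) else 0)"
proof (rule eq_vecI)
  have cols: "col A ` J \<subseteq> carrier_vec n" using A by auto
  then show "dim_vec (lincomb a (col A ` J)) = dim_vec (A *\<^sub>v vec k (\<lambda>l. if l \<in> J then a (col A l) else 0))"
    using A J by (simp add: finite_subset)
  fix i assume "i < dim_vec (A *\<^sub>v vec k (\<lambda>l. if l \<in> J then a (col A l) else 0))"
  then have i: "i < n" using A by simp
  have "lincomb a (col A ` J) $ i = (\<Sum>l\<in>J. a (col A l) * col A l $ i)"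
    by (simp add: lincomb_index[OF i cols] sum.reindex[OF inj])
  also have "\<dots> = (\<Sum>l\<in>J. A $$ (i, l) * a (col A l))"
    using J A i by (intro sum.cong) (auto simp: mult.commute)
  also have "\<dots> = (\<Sum>l<k. A $$ (i, l) * (if l \<in> J then a (col A l) else 0))"
    using J by (simp add: if_distrib sum.inter_restrict[symmetric] Int_absorb1 cong: if_cong)
  also have "\<dots> = (A *\<^sub>v vec k (\<lambda>l. if l \<in> J then a (col A l) else 0)) $ i"
    using mult_mat_vec_index_sum[OF A _ i] by simp
  finally show "lincomb a (col A ` J) $ i = (A *\<^sub>v vec k (\<lambda>l. if l \<in> J then a (col A l) else 0)) $ i" .
qed

text \<open>The columns of A indexed by J are linearly independent as a family, i.e. counted with
  repetitions. Unlike independence of a set of columns, this depends only on the kernel of A.\<close>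
definition independent_columns :: "'a::field mat \<Rightarrow> nat set \<Rightarrow> bool" where
  "independent_columns A J \<longleftrightarrow> J \<subseteq> {..<dim_col A} \<and>
     (\<forall>x\<in>mat_kernel A. (\<forall>l<dim_col A. l \<notin> J \<longrightarrow> x $ l = 0) \<longrightarrow> x = 0\<^sub>v (dim_col A))"

lemma independent_columns_inj_on_col:
  assumes A: "A \<in> carrier_mat n k" and ind: "independent_columns A J"
  shows "inj_on (col A) J"
proof (rule inj_onI, rule ccontr)
  fix i j assume ij: "i \<in> J" "j \<in> J" "col A i = col A j" "i \<noteq> j"
  have ik: "i < k" "j < k" using ij ind A unfolding independent_columns_def by auto
  define x where "x = vec k (\<lambda>l. if l = i then 1 else if l = j then -1 else (0::'a))"
  have "A *\<^sub>v x = 0\<^sub>v n"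
  proof (rule eq_vecI)
    fix r assume "r < dim_vec (0\<^sub>v n :: 'a vec)"
    then have r: "r < n" by simp
    have "(A *\<^sub>v x) $ r = (\<Sum>l<k. A $$ (r, l) * x $ l)"
      by (rule mult_mat_vec_index_sum[OF A _ r]) (simp add: x_def)
    also have "\<dots> = (\<Sum>l<k. (if l = i then A $$ (r, l) else 0) - (if l = j then A $$ (r, l) else 0))"
      unfolding x_def using ij(4) by (intro sum.cong) auto
    also have "\<dots> = col A i $ r - col A j $ r"
      using ik r A by (simp add: sum_subtractf)
    finally show "(A *\<^sub>v x) $ r = 0\<^sub>v n $ r" using ij(3) r by simp
  qed (use A in simp)
  then have "x \<in> mat_kernel A" using A by (auto intro: mat_kernelI simp: x_def)
  moreover have "\<forall>l<k. l \<notin> J \<longrightarrow> x $ l = 0" using ij unfolding x_def by auto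
  ultimately have "x = 0\<^sub>v k" using ind A unfolding independent_columns_def by auto
  moreover have "x $ i = 1" using ik unfolding x_def by simp
  ultimately show False using ik by simp
qed

lemma (in vec_space) independent_columns_lin_indpt:
  assumes A: "A \<in> carrier_mat n k" and ind: "independent_columns A J"
  shows "lin_indpt (col A ` J)"
proof -
  have J: "J \<subseteq> {..<k}" using ind A unfolding independent_columns_def by auto
  have inj: "inj_on (col A) J" by (rule independent_columns_inj_on_col[OF A ind])
  show ?thesis
  proof (rule finite_lin_indpt2)
    show "finite (col A ` J)" using J finite_subset by blast
    show "col A ` J \<subseteq> carrier_vec n" using A by auto
    fix a assume lc: "lincomb a (col A ` J) = 0\<^sub>v n"
    define x where "x = vec k (\<lambda>l. if l \<in> J then a (col A l) else 0)"
    have "x \<in> mat_kernel A"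
      using lc lincomb_col_image[OF A J inj, of a] A by (auto intro: mat_kernelI simp: x_def)
    moreover have "\<forall>l<k. l \<notin> J \<longrightarrow> x $ l = 0" unfolding x_def by auto
    ultimately have "x = 0\<^sub>v k" using ind A unfolding independent_columns_def by auto
    then show "\<forall>v\<in>col A ` J. a v = 0"
      using J unfolding x_def by (auto simp: vec_eq_iff)
  qed
qed

lemma (in vec_space) card_le_rank_if_independent_columns:
  assumes A: "A \<in> carrier_mat n k" and ind: "independent_columns A J"
  shows "card J \<le> rank A"
proof -
  have "col A ` J \<subseteq> set (cols A)"
    using ind A unfolding independent_columns_def cols_def by auto
  from rank_ge_card_indpt[OF A this independent_columns_lin_indpt[OF A ind]]
  show ?thesis using card_image[OF independent_columns_inj_on_col[OF A ind]] by simp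
qed

lemma (in vec_space) independent_columns_attaining_rank:
  assumes A: "A \<in> carrier_mat n k"
  obtains J where "independent_columns A J" "card J = rank A"
proof -
  obtain S where S: "maximal S (\<lambda>T. T \<subseteq> set (cols A) \<and> lin_indpt T)"
    using maximal_exists[of "\<lambda>T. T \<subseteq> set (cols A) \<and> lin_indpt T" "card (set (cols A))" "{}"]
    by (meson List.finite_set card_mono empty_iff empty_subsetI finite_lin_indpt2 rev_finite_subset)
  have li: "lin_indpt S" and "S \<subseteq> set (cols A)" using S unfolding maximal_def by auto
  then have S_cols: "S \<subseteq> col A ` {..<k}" using A by (auto simp: cols_def)
  define index where "index = inv_into {..<k} (col A)"
  define J where "J = index ` S"
  have J: "J \<subseteq> {..<k}"
    using S_cols inv_into_into[of _ "col A" "{..<k}"] unfolding J_def index_def by blast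
  have col_index: "col A (index s) = s" if "s \<in> S" for s
    using S_cols that unfolding index_def by (auto intro: f_inv_into_f)
  have colJ: "col A ` J = S" unfolding J_def image_image using col_index by simp
  have inj: "inj_on (col A) J" unfolding J_def by (rule inj_onI) (auto simp: col_index)
  have "independent_columns A J"
    unfolding independent_columns_def
  proof (intro conjI ballI impI)
    show "J \<subseteq> {..<dim_col A}" using J A by simp
    fix x assume "x \<in> mat_kernel A" and supp: "\<forall>l<dim_col A. l \<notin> J \<longrightarrow> x $ l = 0"
    then have x: "x \<in> carrier_vec k" "A *\<^sub>v x = 0\<^sub>v n" using mat_kernelD[OF A] by auto
    define a where "a s = x $ index s" for s
    have "vec k (\<lambda>l. if l \<in> J then a (col A l) else 0) = x"
      using x(1) supp A unfolding a_def J_def by (auto simp: vec_eq_iff col_index)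
    then have "lincomb a S = 0\<^sub>v n"
      using lincomb_col_image[OF A J inj, of a] colJ x(2) by simp
    then have "a \<in> S \<rightarrow> {\<zero>\<^bsub>class_ring\<^esub>}"
      using not_lindepD[OF li finite_surj[OF _ S_cols] subset_refl] by simp
    then have "x $ l = 0" if "l \<in> J" for l
      using that unfolding J_def a_def by (auto simp: class_ring_simps)
    then show "x = 0\<^sub>v (dim_col A)" using x(1) supp A by (auto simp: vec_eq_iff)
  qed
  moreover have "card J = rank A"
    using rank_card_indpt[OF A S] card_image[OF inj] colJ by simp
  ultimately show thesis by (rule that)
qed

lemma rank_le_of_mat_kernel_subset:
  fixes A B :: "'a::field mat"
  assumes A: "A \<in> carrier_mat n k" and B: "B \<in> carrier_mat m k"
    and ker: "mat_kernel A \<subseteq> mat_kernel B"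
  shows "vec_space.rank m B \<le> vec_space.rank n A"
proof -
  obtain J where J: "independent_columns B J" "card J = vec_space.rank m B"
    using vec_space.independent_columns_attaining_rank[OF B] by blast
  then have "independent_columns A J"
    using A B ker unfolding independent_columns_def by auto
  from vec_space.card_le_rank_if_independent_columns[OF A this] J(2) show ?thesis by simp
qed

definition skip :: "nat \<Rightarrow> nat \<Rightarrow> nat" where
  "skip p i = (if i < p then i else Suc i)"

lemma skip_image:
  assumes "p < n"
  shows "skip p ` {..<n - 1} = {..<n} - {p}"
proof
  show "skip p ` {..<n - 1} \<subseteq> {..<n} - {p}" using assms by (auto simp: skip_def)
  show "{..<n} - {p} \<subseteq> skip p ` {..<n - 1}"
  proof
    fix r assume "r \<in> {..<n} - {p}"
    then have "r = skip p (if r < p then r else r - 1)" "(if r < p then r else r - 1) < n - 1"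
      using assms by (auto simp: skip_def)
    then show "r \<in> skip p ` {..<n - 1}" by blast
  qed
qed

lemma skip_less: "p < n \<Longrightarrow> i < n - 1 \<Longrightarrow> skip p i < n"
  using skip_image by blast

definition delete_col :: "'a mat \<Rightarrow> nat \<Rightarrow> 'a mat" where
  "delete_col A p = mat (dim_row A) (dim_col A - 1) (\<lambda>(i, j). A $$ (i, skip p j))"

definition delete_row :: "'a mat \<Rightarrow> nat \<Rightarrow> 'a mat" where
  "delete_row A p = mat (dim_row A - 1) (dim_col A) (\<lambda>(i, j). A $$ (skip p i, j))"

lemma delete_col_carrier: "A \<in> carrier_mat n k \<Longrightarrow> delete_col A p \<in> carrier_mat n (k - 1)"
  unfolding delete_col_def by simp

lemma delete_row_carrier: "A \<in> carrier_mat n k \<Longrightarrow> delete_row A p \<in> carrier_mat (n - 1) k"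
  unfolding delete_row_def by simp

lemma col_delete_col:
  "A \<in> carrier_mat n k \<Longrightarrow> p < k \<Longrightarrow> j < k - 1 \<Longrightarrow> col (delete_col A p) j = col A (skip p j)"
  using skip_less[of p k j] unfolding delete_col_def by (intro eq_vecI) auto

lemma (in vec_space) rank_delete_col:
  assumes A: "A \<in> carrier_mat n k" and pq: "p < k" "q < k" "p \<noteq> q"
    and col_p: "col A p = c \<cdot>\<^sub>v col A q"
  shows "rank (delete_col A p) = rank A"
proof -
  let ?B = "delete_col A p"
  have "set (cols ?B) = col ?B ` {..<k - 1}"
    using carrier_matD(2)[OF delete_col_carrier[OF A]] by (simp add: cols_def atLeast0LessThan)
  also have "\<dots> = col A ` skip p ` {..<k - 1}"
    unfolding image_image by (rule image_cong) (simp_all add: col_delete_col[OF A pq(1)])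
  finally have cols_B: "set (cols ?B) = col A ` ({..<k} - {p})" using skip_image[OF pq(1)] by simp
  have cols_A: "set (cols A) = insert (col A p) (set (cols ?B))"
    using A pq(1) unfolding cols_B by (auto simp: cols_def)
  have carrier_B: "set (cols ?B) \<subseteq> carrier_vec n" using A cols_B by auto
  have "col A q \<in> span (set (cols ?B))" using span_mem[OF carrier_B] cols_B pq by auto
  then have "col A p \<in> span (set (cols ?B))" using smult_in_span[OF carrier_B] col_p by simp
  then have "span (set (cols A)) = span (set (cols ?B))"
    unfolding cols_A using carrier_B
    by (intro equalityI span_subsetI span_is_monotone) (auto intro: span_mem)
  then show ?thesis unfolding rank_def by simp
qed


lemma delete_row_mult_vec_index:
  assumes "B \<in> carrier_mat n k" "p < n" "i < n - 1"
  shows "(delete_row B p *\<^sub>v x) $ i = (B *\<^sub>v x) $ skip p i"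
proof -
  have "row (delete_row B p) i = row B (skip p i)"
    using assms skip_less[of p n i] by (intro eq_vecI) (simp_all add: delete_row_def)
  then show ?thesis using assms skip_less[of p n i] by (simp add: delete_row_def)
qed

lemma mat_kernel_delete_row:
  assumes B: "B \<in> carrier_mat n k" and pq: "p < n" "q < n" "p \<noteq> q"
    and row_p: "row B p = c \<cdot>\<^sub>v row B q"
  shows "mat_kernel (delete_row B p) = mat_kernel B"
proof -
  have C: "delete_row B p \<in> carrier_mat (n - 1) k" by (rule delete_row_carrier[OF B])
  have "x \<in> mat_kernel B \<longleftrightarrow> x \<in> mat_kernel (delete_row B p)" if x: "x \<in> carrier_vec k" for x
  proof -
    have Bx_p: "(B *\<^sub>v x) $ p = c * (B *\<^sub>v x) $ q"
      using B pq row_p x by (simp add: smult_scalar_prod_distrib[of _ k])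
    have "x \<in> mat_kernel B \<longleftrightarrow> (\<forall>r\<in>{..<n}. (B *\<^sub>v x) $ r = 0)"
      using B x by (auto simp: mat_kernel_def vec_eq_iff)
    also have "\<dots> \<longleftrightarrow> (\<forall>r\<in>{..<n} - {p}. (B *\<^sub>v x) $ r = 0)"
      using Bx_p pq by auto
    also have "\<dots> \<longleftrightarrow> (\<forall>i\<in>{..<n - 1}. (B *\<^sub>v x) $ skip p i = 0)"
      unfolding skip_image[OF pq(1), symmetric] by simp
    also have "\<dots> \<longleftrightarrow> x \<in> mat_kernel (delete_row B p)"
      using C x delete_row_mult_vec_index[OF B pq(1)] by (auto simp: mat_kernel_def vec_eq_iff)
    finally show ?thesis .
  qed
  then show ?thesis using B C by (auto simp: mat_kernel_def)
qed

lemma rank_delete_row: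
  fixes B :: "'a::field mat"
  assumes B: "B \<in> carrier_mat n k" and pq: "p < n" "q < n" "p \<noteq> q"
    and row_p: "row B p = c \<cdot>\<^sub>v row B q"
  shows "vec_space.rank (n - 1) (delete_row B p) = vec_space.rank n B"
  using rank_le_of_mat_kernel_subset[OF B delete_row_carrier[OF B]]
    rank_le_of_mat_kernel_subset[OF delete_row_carrier[OF B] B]
    mat_kernel_delete_row[OF B pq row_p]
  by (simp add: antisym)


lemma rank_delete_row_col:
  fixes M :: "'a::field mat"
  assumes M: "M \<in> carrier_mat n n" and pq: "p < n" "q < n" "p \<noteq> q"
    and col_p: "col M p = c \<cdot>\<^sub>v col M q" and row_p: "row M p = c \<cdot>\<^sub>v row M q"
  shows "vec_space.rank (n - 1) (delete_row (delete_col M p) p) = vec_space.rank n M"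
proof -
  have row_entry: "M $$ (p, l) = c * M $$ (q, l)" if "l < n" for l
    using arg_cong[where f = "\<lambda>v. v $ l", OF row_p] M pq that by simp
  have "row (delete_col M p) p = c \<cdot>\<^sub>v row (delete_col M p) q"
    using M pq skip_less[OF pq(1)] row_entry by (intro eq_vecI) (simp_all add: delete_col_def)
  from rank_delete_row[OF delete_col_carrier[OF M] pq this]
  show ?thesis using vec_space.rank_delete_col[OF M pq col_p] by simp
qed

lemma sorted_list_of_set_remove_nth:
  assumes fin: "finite V" and p: "p < card V" and u: "sorted_list_of_set V ! p = u"
    and i: "i < card V - 1"
  shows "sorted_list_of_set (V - {u}) ! i = sorted_list_of_set V ! skip p i"
proof -
  define vs where "vs = sorted_list_of_set V"
  have len: "length vs = card V" and dist: "distinct vs" unfolding vs_def using fin by auto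
  have split: "vs = take p vs @ u # drop (Suc p) vs"
    using id_take_nth_drop[of p vs] p len u unfolding vs_def by simp
  have "u \<notin> set (take p vs)" using dist by (subst (asm) split) simp
  have "sorted_list_of_set (V - {u}) = remove1 u vs"
    unfolding vs_def using fin by (simp add: sorted_list_of_set_remove)
  also have "\<dots> = take p vs @ drop (Suc p) vs"
    by (subst split) (simp add: remove1_append \<open>u \<notin> set (take p vs)\<close>)
  finally have "sorted_list_of_set (V - {u}) = take p vs @ drop (Suc p) vs" .
  moreover have "length (take p vs) = p" using p len by simp
  ultimately show ?thesis
    using p len i unfolding vs_def[symmetric] by (cases "i < p") (simp_all add: nth_append skip_def)
qed

lemma skew_rank_delete_vertex_proportional:
  fixes V :: "'a::linorder set"
  assumes fin: "finite V" and uv: "u \<in> V" "v \<in> V" "u \<noteq> v"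
    and col_u: "\<And>w. skew_entry A w u = c * skew_entry A w v"
    and row_u: "\<And>w. skew_entry A u w = c * skew_entry A v w"
  shows "skew_rank (V - {u}) (del_vertex_arcs A u) = skew_rank V A"
proof -
  define n where "n = card V"
  define vs where "vs = sorted_list_of_set V"
  define M where "M = skew_matrix V A"
  have len: "length vs = n" and dist: "distinct vs" and set_vs: "set vs = V"
    unfolding vs_def n_def using fin by auto
  obtain p where p: "p < n" "vs ! p = u" using uv(1) set_vs len by (metis in_set_conv_nth)
  obtain q where q: "q < n" "vs ! q = v" using uv(2) set_vs len by (metis in_set_conv_nth)
  have M: "M \<in> carrier_mat n n" unfolding M_def skew_matrix_def n_def by (simp add: Let_def)
  have M_entry: "M $$ (i, j) = skew_entry A (vs ! i) (vs ! j)" if "i < n" "j < n" for i j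
    using that unfolding M_def skew_matrix_def n_def vs_def by (simp add: Let_def)
  have "col M p = c \<cdot>\<^sub>v col M q" "row M p = c \<cdot>\<^sub>v row M q"
    using M p q M_entry col_u row_u by auto
  from rank_delete_row_col[OF M p(1) q(1) _ this] p q uv(3)
  have rank: "vec_space.rank (n - 1) (delete_row (delete_col M p) p) = vec_space.rank n M" by auto
  have card: "card (V - {u}) = n - 1" using fin uv unfolding n_def by simp
  have vs_skip: "vs ! skip p i \<noteq> u" if "i < n - 1" for i
  proof -
    have "skip p i \<in> {..<n} - {p}" using skip_image[OF p(1)] that by blast
    then show ?thesis using dist p len by (auto simp: nth_eq_iff_index_eq)
  qed
  have "skew_matrix (V - {u}) (del_vertex_arcs A u) = delete_row (delete_col M p) p"
  proof (rule eq_matI)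
    fix i j assume "i < dim_row (delete_row (delete_col M p) p)" "j < dim_col (delete_row (delete_col M p) p)"
    then have ij: "i < n - 1" "j < n - 1" using M by (auto simp: delete_row_def delete_col_def)
    then have "sorted_list_of_set (V - {u}) ! i = vs ! skip p i"
      "sorted_list_of_set (V - {u}) ! j = vs ! skip p j"
      using sorted_list_of_set_remove_nth[OF fin] p unfolding n_def vs_def by auto
    then show "skew_matrix (V - {u}) (del_vertex_arcs A u) $$ (i, j) = delete_row (delete_col M p) p $$ (i, j)"
      using ij card M vs_skip M_entry skip_less[OF p(1)]
      by (simp add: skew_matrix_def delete_row_def delete_col_def skew_entry_def del_vertex_arcs_def Let_def)
  qed (use M card in \<open>simp_all add: skew_matrix_def delete_row_def delete_col_def Let_def\<close>)
  then show ?thesis using rank card unfolding skew_rank_def M_def n_def by simp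
qed


lemma adjacent_iff_if_same_nbhd:
  assumes "oriented_graph V A" and "nbhd V A u = nbhd V A v"
  shows "adjacent A u w \<longleftrightarrow> adjacent A v w"
  using assms unfolding oriented_graph_def nbhd_def adjacent_def by blast

lemma uniform_twins_skew_entry:
  assumes og: "oriented_graph V A" and tw: "uniform_twins V A u v"
  shows "skew_entry A w u = skew_entry A w v" "skew_entry A u w = skew_entry A v w"
proof -
  have "(A w u \<longleftrightarrow> A w v) \<and> (A u w \<longleftrightarrow> A v w)"
  proof (cases "adjacent A u w")
    case True
    then have "w \<in> nbhd V A u" using og unfolding oriented_graph_def nbhd_def adjacent_def by blast
    then show ?thesis using og tw unfolding oriented_graph_def uniform_twins_def by blast
  next
    case False
    then show ?thesis using adjacent_iff_if_same_nbhd[OF og] tw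
      unfolding uniform_twins_def adjacent_def by blast
  qed
  then show "skew_entry A w u = skew_entry A w v" "skew_entry A u w = skew_entry A v w"
    unfolding skew_entry_def by simp_all
qed

lemma opposite_twins_skew_entry:
  assumes og: "oriented_graph V A" and tw: "opposite_twins V A u v"
  shows "skew_entry A w u = - skew_entry A w v" "skew_entry A u w = - skew_entry A v w"
proof -
  have "(A w u \<longleftrightarrow> A v w) \<and> (A u w \<longleftrightarrow> A w v)"
  proof (cases "adjacent A u w")
    case True
    then have "w \<in> nbhd V A u" using og unfolding oriented_graph_def nbhd_def adjacent_def by blast
    then show ?thesis using og tw unfolding oriented_graph_def opposite_twins_def by blast
  next
    case False
    then show ?thesis using adjacent_iff_if_same_nbhd[OF og] tw
      unfolding opposite_twins_def adjacent_def by blast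
  qed
  moreover have "\<not> (A w u \<and> A u w)" "\<not> (A w v \<and> A v w)" using og unfolding oriented_graph_def by blast+
  ultimately show "skew_entry A w u = - skew_entry A w v" "skew_entry A u w = - skew_entry A v w"
    unfolding skew_entry_def by auto
qed

lemma uniform_twins_sym: "uniform_twins V A u v \<Longrightarrow> uniform_twins V A v u"
  unfolding uniform_twins_def adjacent_def by auto

lemma opposite_twins_sym: "opposite_twins V A u v \<Longrightarrow> opposite_twins V A v u"
  unfolding opposite_twins_def adjacent_def by auto

lemma skew_rank_delete_twin:
  assumes og: "oriented_graph V A" and tw: "uniform_twins V A u v \<or> opposite_twins V A u v"
  shows "skew_rank (V - {u}) (del_vertex_arcs A u) = skew_rank V A"
proof -
  have fin: "finite V" using og unfolding oriented_graph_def by simp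
  have uv: "u \<in> V" "v \<in> V" "u \<noteq> v" using tw unfolding uniform_twins_def opposite_twins_def by auto
  from tw show ?thesis
  proof
    assume "uniform_twins V A u v"
    from uniform_twins_skew_entry[OF og this] show ?thesis
      by (intro skew_rank_delete_vertex_proportional[OF fin uv, of _ 1]) simp_all
  next
    assume "opposite_twins V A u v"
    from opposite_twins_skew_entry[OF og this] show ?thesis
      by (intro skew_rank_delete_vertex_proportional[OF fin uv, of _ "-1"]) simp_all
  qed
qed

theorem lemma2p7:
  fixes V :: "'a::linorder set" and A :: "'a \<Rightarrow> 'a \<Rightarrow> bool" and u v :: 'a
  assumes "oriented_graph V A"
    and "uniform_twins V A u v \<or> opposite_twins V A u v"
  shows "skew_rank V A = skew_rank (V - {u}) (del_vertex_arcs A u) \<and>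
         skew_rank (V - {u}) (del_vertex_arcs A u) = skew_rank (V - {v}) (del_vertex_arcs A v)"
proof -
  have "uniform_twins V A v u \<or> opposite_twins V A v u"
    using assms(2) by (metis uniform_twins_sym opposite_twins_sym)
  then show ?thesis
    using skew_rank_delete_twin[OF assms] skew_rank_delete_twin[OF assms(1)] by simp
qed

end
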